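(* Let $n,r\ge1$. Then, on $\mathbb{R}^n$: (i) $\mathcal{S}_r^-\Lambda^0=\mathcal{S}_r\Lambda^0$; (ii) $\mathcal{S}_r^-\Lambda^n=\mathcal{S}_{r-1}\Lambda^n$; (iii) for $0\le k\le n$, $\mathcal{S}_r^-\Lambda^k+d\,\mathcal{S}_{r+1}\Lambda^{k-1}=\mathcal{S}_r\Lambda^k$.
   Context: Fix $n\ge1$. For a multi-index $\alpha\in\mathbb{N}^n$ and a subset $\sigma=\{\sigma(1)<\dots<\sigma(k)\}\subset\{1,\dots,n\}$, the form monomial is $x^\alpha dx_\sigma:=x_1^{\alpha_1}\cdots x_n^{\alpha_n}\,dx_{\sigma(1)}\wedge\cdots\wedge dx_{\sigma(k)}$, of degree $|\alpha|$. $\mathcal{H}_r\Lambda^k(\mathbb{R}^n)$ is the span of form monomials with $|\alpha|=r$, $|\sigma|=k$ (it is $0$ if $r<0$ or $k\notin\{0,\dots,n\}$), and $\mathcal{P}_r\Lambda^k:=\bigoplus_{j=0}^r\mathcal{H}_j\Lambda^k$ ($=0$ if $r<0$). $d$ is the exterior derivative. The Koszul operator $\kappa$ is defined on monomials by $\kappa(x^\alpha dx_\sigma)=\sum_{i=1}^k(-1)^{i+1}x^\alpha x_{\sigma(i)}\,dx_{\sigma(1)}\wedge\cdots\wedge\widehat{dx_{\sigma(i)}}\wedge\cdots\wedge dx_{\sigma(k)}$ and extended linearly. The linear degree is $\mathrm{ldeg}(x^\alpha dx_\sigma):=\#\{i\notin\sigma:\alpha_i=1\}$, and $\mathcal{H}_{r,l}\Lambda^k$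 is the span of form monomials in $\mathcal{H}_r\Lambda^k$ with linear degree $\ge l$. Define $\mathcal{J}_r\Lambda^k:=\sum_{l\ge1}\kappa\,\mathcal{H}_{r+l-1,l}\Lambda^{k+1}$, the serendipity space $\mathcal{S}_r\Lambda^k:=\mathcal{P}_r\Lambda^k+\mathcal{J}_r\Lambda^k+d\,\mathcal{J}_{r+1}\Lambda^{k-1}$ (forms of degree $-1$ or $n+1$ are $0$), and for $r\ge1$ the trimmed serendipity space $\mathcal{S}_r^-\Lambda^k:=\mathcal{S}_{r-1}\Lambda^k+\kappa\,\mathcal{S}_{r-1}\Lambda^{k+1}$, all on $\mathbb{R}^n$. *)

theory Defs
  imports Complex_Main
begin

text \<open>Polynomial differential forms on R^n, represented by their coefficients
  with respect to the form monomials.  A monomial x^alpha dx_sigma is encoded as the pair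
  (alpha, sigma) with alpha :: nat => nat (exponents, supported in {1..n}) and
  sigma :: nat set (a subset of {1..n}); sigma is identified with its increasing
  enumeration.  A form is a finitely supported real coefficient function on monomials.\<close>

type_synonym mono = "(nat \<Rightarrow> nat) \<times> nat set"
type_synonym form = "mono \<Rightarrow> real"

definition fmono :: "mono \<Rightarrow> form" where
  "fmono m = (\<lambda>m'. if m' = m then 1 else 0)"

definition fzero :: form where "fzero = (\<lambda>m. 0)"

definition fadd :: "form \<Rightarrow> form \<Rightarrow> form" where
  "fadd a b = (\<lambda>m. a m + b m)"

definition lin_span :: "form set \<Rightarrow> form set" where
  "lin_span S = {w. \<exists>F c. finite F \<and> F \<subseteq> S \<and> w = (\<lambda>m. \<Sum>f\<in>F. c f * f m)}"

definition ssum :: "form set \<Rightarrow> form set \<Rightarrow> form set" (infixl "\<oplus>\<^sub>f" 65) where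
  "A \<oplus>\<^sub>f B = {fadd a b | a b. a \<in> A \<and> b \<in> B}"

definition lin_ext :: "(mono \<Rightarrow> form) \<Rightarrow> form \<Rightarrow> form" where
  "lin_ext f w = (\<lambda>m'. \<Sum>m\<in>{m. w m \<noteq> 0}. w m * f m m')"

text \<open>Koszul operator on a monomial: the i-th term (i counted from 1 in the
  increasing enumeration of sigma) carries the sign (-1)^(i+1) = (-1)^(number of
  elements of sigma below sigma(i)).\<close>
definition kappa_mono :: "mono \<Rightarrow> form" where
  "kappa_mono m = (case m of (a, s) \<Rightarrow> (\<lambda>(b, t).
     \<Sum>j\<in>s. if b = a(j := a j + 1) \<and> t = s - {j}
             then (-1) ^ card {l\<in>s. l < j} else 0))"

definition kappa :: "form \<Rightarrow> form" where
  "kappa = lin_ext kappa_mono"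

text \<open>Exterior derivative on a monomial: d(x^a dx_s) = sum_j a_j x^(a - e_j) dx_j /\ dx_s,
  and dx_j /\ dx_s = (-1)^(number of elements of s below j) dx_(s \<union> {j}) for j not in s.\<close>
definition d_mono :: "nat \<Rightarrow> mono \<Rightarrow> form" where
  "d_mono n m = (case m of (a, s) \<Rightarrow> (\<lambda>(b, t).
     \<Sum>j\<in>{1..n} - s. if 1 \<le> a j \<and> b = a(j := a j - 1) \<and> t = insert j s
             then of_nat (a j) * (-1) ^ card {l\<in>s. l < j} else 0))"

definition dext :: "nat \<Rightarrow> form \<Rightarrow> form" where
  "dext n = lin_ext (d_mono n)"

definition fmonos :: "nat \<Rightarrow> nat \<Rightarrow> int \<Rightarrow> mono set" where
  "fmonos n r k = {(a, s). (\<forall>i. a i \<noteq> 0 \<longrightarrow> i \<in> {1..n}) \<and> s \<subseteq> {1..n}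
      \<and> int (card s) = k \<and> (\<Sum>i\<in>{1..n}. a i) = r}"

definition ldeg :: "nat \<Rightarrow> mono \<Rightarrow> nat" where
  "ldeg n m = (case m of (a, s) \<Rightarrow> card {i\<in>{1..n}. i \<notin> s \<and> a i = 1})"

definition HH :: "nat \<Rightarrow> nat \<Rightarrow> int \<Rightarrow> form set" where
  "HH n r k = lin_span (fmono ` fmonos n r k)"

definition HHl :: "nat \<Rightarrow> nat \<Rightarrow> nat \<Rightarrow> int \<Rightarrow> form set" where
  "HHl n r l k = lin_span (fmono ` {m \<in> fmonos n r k. l \<le> ldeg n m})"

definition PP :: "nat \<Rightarrow> nat \<Rightarrow> int \<Rightarrow> form set" where
  "PP n r k = lin_span (\<Union>j\<in>{0..r}. HH n j k)"

definition JJ :: "nat \<Rightarrow> nat \<Rightarrow> int \<Rightarrow> form set" where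
  "JJ n r k = lin_span (\<Union>l\<in>{1..}. kappa ` HHl n (r + l - 1) l (k + 1))"

definition SS :: "nat \<Rightarrow> nat \<Rightarrow> int \<Rightarrow> form set" where
  "SS n r k = PP n r k \<oplus>\<^sub>f JJ n r k \<oplus>\<^sub>f dext n ` JJ n (r + 1) (k - 1)"

text \<open>Trimmed serendipity space (meant for r >= 1).\<close>
definition SSm :: "nat \<Rightarrow> nat \<Rightarrow> int \<Rightarrow> form set" where
  "SSm n r k = SS n (r - 1) k \<oplus>\<^sub>f kappa ` SS n (r - 1) (k + 1)"

end

theory Submission
  imports Defs
begin

text \<open>On forms that are homogeneous of polynomial degree p and form degree k the Koszul operator
  and the exterior derivative satisfy the homotopy formula kappa d + d kappa = (p + k) id, and
  moreover kappa kappa = 0 and d d = 0. These identities give S_{r-1} Lambda^k,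
  kappa S_{r-1} Lambda^{k+1} and d S_{r+1} Lambda^{k-1} inside S_r Lambda^k (the generators of J
  are re-indexed from J_{r-1} to H_r + J_r). Conversely, a form w of degree r is
  (kappa d w + d kappa w) / (r + k), and a generator kappa h of J_r equals kappa d kappa h / c with
  d kappa h \<in> S_{r-1} Lambda^{k+1}; so S_r Lambda^k lies in S_r^- Lambda^k + d S_{r+1} Lambda^{k-1},
  which is (iii). Parts (i) and (ii) are the cases in which d S_{r+1} Lambda^{-1}, resp.
  kappa S_{r-1} Lambda^{n+1}, vanishes.\<close>

section \<open>Subspaces of finitely supported forms\<close>

definition fin_supp :: "form \<Rightarrow> bool" where
  "fin_supp w \<longleftrightarrow> finite {m. w m \<noteq> 0}"

definition fscale :: "real \<Rightarrow> form \<Rightarrow> form" where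
  "fscale c w = (\<lambda>m. c * w m)"

text \<open>Since kappa and dext are defined by summing over the support, they are
  linear only on finitely supported forms; subspaces are therefore required to consist of such
  forms.\<close>

definition fsubspace :: "form set \<Rightarrow> bool" where
  "fsubspace U \<longleftrightarrow> fzero \<in> U \<and> (\<forall>a\<in>U. \<forall>b\<in>U. fadd a b \<in> U) \<and> (\<forall>c. \<forall>a\<in>U. fscale c a \<in> U)
     \<and> (\<forall>a\<in>U. fin_supp a)"

definition flinear :: "(form \<Rightarrow> form) \<Rightarrow> bool" where
  "flinear L \<longleftrightarrow> (\<forall>a b. fin_supp a \<longrightarrow> fin_supp b \<longrightarrow> L (fadd a b) = fadd (L a) (L b))
     \<and> (\<forall>c a. fin_supp a \<longrightarrow> L (fscale c a) = fscale c (L a)) \<and> (\<forall>a. fin_supp a \<longrightarrow> fin_supp (L a))"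

lemma fadd_fzero_left [simp]: "fadd fzero a = a"
  by (simp add: fadd_def fzero_def)

lemma fin_supp_fzero [simp]: "fin_supp fzero"
  by (simp add: fin_supp_def fzero_def)

lemma fin_supp_fadd: "fin_supp a \<Longrightarrow> fin_supp b \<Longrightarrow> fin_supp (fadd a b)"
  unfolding fin_supp_def fadd_def
  by (rule finite_subset[of _ "{m. a m \<noteq> 0} \<union> {m. b m \<noteq> 0}"]) auto

lemma fin_supp_fscale: "fin_supp a \<Longrightarrow> fin_supp (fscale c a)"
  unfolding fin_supp_def fscale_def by (rule finite_subset[of _ "{m. a m \<noteq> 0}"]) auto

lemma fin_supp_fmono [simp]: "fin_supp (fmono m)"
  unfolding fin_supp_def fmono_def by (rule finite_subset[of _ "{m}"]) auto

lemma sum_insert_eq_fadd: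
  "finite I \<Longrightarrow> i \<notin> I \<Longrightarrow>
    (\<lambda>x. \<Sum>i\<in>insert i I. c i * g i x) = fadd (fscale (c i) (g i)) (\<lambda>x. \<Sum>i\<in>I. c i * g i x)"
  by (simp add: fadd_def fscale_def)

lemma fin_supp_sum:
  "finite I \<Longrightarrow> (\<And>i. i \<in> I \<Longrightarrow> fin_supp (g i)) \<Longrightarrow> fin_supp (\<lambda>x. \<Sum>i\<in>I. c i * g i x)"
proof (induction I rule: finite_induct)
  case empty
  then show ?case by (simp add: fin_supp_def)
next
  case (insert i I)
  then show ?case
    unfolding sum_insert_eq_fadd[OF insert(1,2)] by (simp add: fin_supp_fadd fin_supp_fscale)
qed

lemma fin_supp_sum_fmono: "fin_supp (\<lambda>x. \<Sum>i\<in>I. c i * fmono (g i) x)"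
  by (cases "finite I") (simp_all add: fin_supp_sum, simp add: fin_supp_def)

lemma fsubspace_fzero: "fsubspace U \<Longrightarrow> fzero \<in> U"
  and fsubspace_fadd: "fsubspace U \<Longrightarrow> a \<in> U \<Longrightarrow> b \<in> U \<Longrightarrow> fadd a b \<in> U"
  and fsubspace_fscale: "fsubspace U \<Longrightarrow> a \<in> U \<Longrightarrow> fscale c a \<in> U"
  and fsubspace_fin_supp: "fsubspace U \<Longrightarrow> a \<in> U \<Longrightarrow> fin_supp a"
  by (simp_all add: fsubspace_def)

lemma fsubspace_sum:
  assumes U: "fsubspace U"
  shows "finite I \<Longrightarrow> (\<And>i. i \<in> I \<Longrightarrow> c i \<noteq> 0 \<Longrightarrow> g i \<in> U) \<Longrightarrow> (\<lambda>x. \<Sum>i\<in>I. c i * g i x) \<in> U"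
proof (induction I rule: finite_induct)
  case empty
  then show ?case using fsubspace_fzero[OF U] by (simp add: fzero_def)
next
  case (insert i I)
  show ?case
  proof (cases "c i = 0")
    case True
    then show ?thesis using insert by simp
  next
    case False
    then show ?thesis
      unfolding sum_insert_eq_fadd[OF insert(1,2)] using insert U
      by (simp add: fsubspace_fadd fsubspace_fscale)
  qed
qed

lemma fsubspace_fzero_only: "fsubspace {fzero}"
  unfolding fsubspace_def by (simp add: fadd_def fzero_def fscale_def fin_supp_def)

lemma lin_spanI: "finite F \<Longrightarrow> F \<subseteq> G \<Longrightarrow> (\<lambda>m. \<Sum>f\<in>F. c f * f m) \<in> lin_span G"
  unfolding lin_span_def by blast

lemma lin_spanE:
  assumes "w \<in> lin_span G"
  obtains F c where "finite F" "F \<subseteq> G" "w = (\<lambda>m. \<Sum>f\<in>F. c f * f m)"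
  using assms unfolding lin_span_def by blast

lemma lin_span_fsubspace:
  assumes G: "\<And>g. g \<in> G \<Longrightarrow> fin_supp g"
  shows "fsubspace (lin_span G)"
proof -
  have "fadd a b \<in> lin_span G" if a: "a \<in> lin_span G" and b: "b \<in> lin_span G" for a b
  proof -
    obtain F1 c1 where F1: "finite F1" "F1 \<subseteq> G" "a = (\<lambda>m. \<Sum>f\<in>F1. c1 f * f m)"
      using a by (rule lin_spanE)
    obtain F2 c2 where F2: "finite F2" "F2 \<subseteq> G" "b = (\<lambda>m. \<Sum>f\<in>F2. c2 f * f m)"
      using b by (rule lin_spanE)
    define c where "c f = (if f \<in> F1 then c1 f else 0) + (if f \<in> F2 then c2 f else 0)" for f
    have "(\<Sum>f\<in>F1 \<union> F2. c f * f m) = (\<Sum>f\<in>F1. c1 f * f m) + (\<Sum>f\<in>F2. c2 f * f m)" for m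
    proof -
      have "(\<Sum>f\<in>F1 \<union> F2. (if f \<in> F1 then c1 f else 0) * f m) = (\<Sum>f\<in>F1. c1 f * f m)"
        by (rule sum.mono_neutral_cong_right) (simp_all add: F1(1) F2(1))
      moreover have "(\<Sum>f\<in>F1 \<union> F2. (if f \<in> F2 then c2 f else 0) * f m) = (\<Sum>f\<in>F2. c2 f * f m)"
        by (rule sum.mono_neutral_cong_right) (simp_all add: F1(1) F2(1))
      ultimately show ?thesis
        unfolding c_def distrib_right sum.distrib by simp
    qed
    then have "fadd a b = (\<lambda>m. \<Sum>f\<in>F1 \<union> F2. c f * f m)"
      by (simp add: fadd_def F1(3) F2(3))
    then show ?thesis
      using lin_spanI[of "F1 \<union> F2" G c] F1 F2 by simp
  qed
  moreover have "fscale c a \<in> lin_span G" if a: "a \<in> lin_span G" for a c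
  proof -
    obtain F d where F: "finite F" "F \<subseteq> G" "a = (\<lambda>m. \<Sum>f\<in>F. d f * f m)"
      using a by (rule lin_spanE)
    have "fscale c a = (\<lambda>m. \<Sum>f\<in>F. (c * d f) * f m)"
      by (simp add: F(3) fscale_def sum_distrib_left mult.assoc)
    then show ?thesis
      using lin_spanI[OF F(1,2)] by simp
  qed
  moreover have "fzero \<in> lin_span G"
    using lin_spanI[of "{}" G] by (simp add: fzero_def)
  moreover have "fin_supp a" if "a \<in> lin_span G" for a
    using that G by (elim lin_spanE) (auto intro!: fin_supp_sum)
  ultimately show ?thesis
    unfolding fsubspace_def by blast
qed

lemma lin_span_superset: "g \<in> G \<Longrightarrow> g \<in> lin_span G"
  using lin_spanI[of "{g}" G "\<lambda>_. 1"] by simp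

lemma lin_span_least: "fsubspace U \<Longrightarrow> G \<subseteq> U \<Longrightarrow> lin_span G \<subseteq> U"
  by (auto elim!: lin_spanE intro!: fsubspace_sum)

lemma lin_span_mono: "G \<subseteq> G' \<Longrightarrow> (\<And>g. g \<in> G' \<Longrightarrow> fin_supp g) \<Longrightarrow> lin_span G \<subseteq> lin_span G'"
  by (meson lin_span_fsubspace lin_span_least lin_span_superset subset_iff)

lemma lin_span_empty: "lin_span {} = {fzero}"
  using lin_span_least[OF fsubspace_fzero_only] fsubspace_fzero[OF lin_span_fsubspace] by blast

lemma fsubspace_ssum:
  assumes A: "fsubspace A" and B: "fsubspace B"
  shows "fsubspace (A \<oplus>\<^sub>f B)"
proof -
  have "fzero = fadd fzero fzero"
    by (simp add: fadd_def fzero_def)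
  then have "fzero \<in> A \<oplus>\<^sub>f B"
    unfolding ssum_def using A B fsubspace_fzero by blast
  moreover have "fadd x y \<in> A \<oplus>\<^sub>f B" if xy: "x \<in> A \<oplus>\<^sub>f B" "y \<in> A \<oplus>\<^sub>f B" for x y
  proof -
    obtain a b a' b' where "a \<in> A" "b \<in> B" "a' \<in> A" "b' \<in> B" "x = fadd a b" "y = fadd a' b'"
      using xy unfolding ssum_def by blast
    moreover have "fadd (fadd a b) (fadd a' b') = fadd (fadd a a') (fadd b b')"
      by (simp add: fadd_def algebra_simps)
    ultimately show ?thesis
      unfolding ssum_def using A B fsubspace_fadd by blast
  qed
  moreover have "fscale c (fadd a b) = fadd (fscale c a) (fscale c b)" for c a b
    by (simp add: fadd_def fscale_def distrib_left)
  then have "fscale c x \<in> A \<oplus>\<^sub>f B" if "x \<in> A \<oplus>\<^sub>f B" for x c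
    using that A B fsubspace_fscale unfolding ssum_def by blast
  moreover have "fin_supp x" if "x \<in> A \<oplus>\<^sub>f B" for x
    using that A B unfolding ssum_def by (auto intro: fin_supp_fadd fsubspace_fin_supp)
  ultimately show ?thesis
    unfolding fsubspace_def by blast
qed

lemma ssum_least: "fsubspace U \<Longrightarrow> A \<subseteq> U \<Longrightarrow> B \<subseteq> U \<Longrightarrow> A \<oplus>\<^sub>f B \<subseteq> U"
  unfolding ssum_def using fsubspace_fadd by blast

lemma ssum_upper1: "fzero \<in> B \<Longrightarrow> A \<subseteq> A \<oplus>\<^sub>f B"
  unfolding ssum_def by (force simp: fadd_def fzero_def)

lemma ssum_upper2: "fzero \<in> A \<Longrightarrow> B \<subseteq> A \<oplus>\<^sub>f B"
  unfolding ssum_def by (force simp: fadd_def fzero_def)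

lemma ssum_fzero_right: "A \<oplus>\<^sub>f {fzero} = A"
  unfolding ssum_def by (auto simp: fadd_def fzero_def)

lemma flinear_fadd: "flinear L \<Longrightarrow> fin_supp a \<Longrightarrow> fin_supp b \<Longrightarrow> L (fadd a b) = fadd (L a) (L b)"
  and flinear_fscale: "flinear L \<Longrightarrow> fin_supp a \<Longrightarrow> L (fscale c a) = fscale c (L a)"
  and flinear_fin_supp: "flinear L \<Longrightarrow> fin_supp a \<Longrightarrow> fin_supp (L a)"
  by (simp_all add: flinear_def)

lemma flinear_fzero: "flinear L \<Longrightarrow> L fzero = fzero"
  using flinear_fscale[of L fzero 0] by (simp add: fscale_def fzero_def fin_supp_def)

lemma flinear_sum:
  assumes L: "flinear L"
  shows "finite I \<Longrightarrow> (\<And>i. i \<in> I \<Longrightarrow> fin_supp (g i)) \<Longrightarrow>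
    L (\<lambda>x. \<Sum>i\<in>I. c i * g i x) = (\<lambda>x. \<Sum>i\<in>I. c i * L (g i) x)"
proof (induction I rule: finite_induct)
  case empty
  then show ?case using flinear_fzero[OF L] by (simp add: fzero_def)
next
  case (insert i I)
  then show ?case
    unfolding sum_insert_eq_fadd[OF insert(1,2)]
    by (simp add: L flinear_fadd flinear_fscale fin_supp_fscale fin_supp_sum)
qed

lemma flinear_id: "flinear (\<lambda>w. w)"
  unfolding flinear_def by simp

lemma flinear_comp: "flinear L1 \<Longrightarrow> flinear L2 \<Longrightarrow> flinear (\<lambda>w. L1 (L2 w))"
  unfolding flinear_def by (simp add: fin_supp_fscale)

lemma flinear_plus: "flinear L1 \<Longrightarrow> flinear L2 \<Longrightarrow> flinear (\<lambda>w. fadd (L1 w) (L2 w))"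
  unfolding flinear_def
  by (auto simp: fadd_def fscale_def algebra_simps intro: fin_supp_fadd[unfolded fadd_def])

lemma flinear_fscale_map: "flinear (fscale c)"
  unfolding flinear_def
  by (auto simp: fadd_def fscale_def algebra_simps intro: fin_supp_fscale[unfolded fscale_def])

lemma flinear_fzero_map: "flinear (\<lambda>w. fzero)"
  unfolding flinear_def by (simp add: fadd_def fscale_def fzero_def fin_supp_def)

lemma fsubspace_image: assumes L: "flinear L" and A: "fsubspace A" shows "fsubspace (L ` A)"
proof -
  have "fzero \<in> L ` A"
    using flinear_fzero[OF L] fsubspace_fzero[OF A] by force
  moreover have "fadd (L a) (L b) \<in> L ` A" if "a \<in> A" "b \<in> A" for a b
    using that L A by (metis flinear_fadd fsubspace_fadd fsubspace_fin_supp image_eqI)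
  moreover have "fscale c (L a) \<in> L ` A" if "a \<in> A" for a c
    using that L A by (metis flinear_fscale fsubspace_fscale fsubspace_fin_supp image_eqI)
  moreover have "fin_supp (L a)" if "a \<in> A" for a
    using that L A flinear_fin_supp fsubspace_fin_supp by blast
  ultimately show ?thesis
    unfolding fsubspace_def by blast
qed

lemma fsubspace_preimage:
  assumes L: "flinear L" and U: "fsubspace U"
  shows "fsubspace {w. fin_supp w \<and> L w \<in> U}"
  using flinear_fzero[OF L] fsubspace_fzero[OF U]
  by (auto simp: fsubspace_def flinear_fadd[OF L] flinear_fscale[OF L] fin_supp_fadd fin_supp_fscale
      fsubspace_fadd[OF U] fsubspace_fscale[OF U])

lemma fsubspace_equalizer:
  assumes L1: "flinear L1" and L2: "flinear L2"
  shows "fsubspace {w. fin_supp w \<and> L1 w = L2 w}"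
  using flinear_fzero[OF L1] flinear_fzero[OF L2]
  by (auto simp: fsubspace_def flinear_fadd[OF L1] flinear_fscale[OF L1] flinear_fadd[OF L2]
      flinear_fscale[OF L2] fin_supp_fadd fin_supp_fscale)

lemma flinear_image_lin_span:
  assumes "flinear L" "fsubspace U" "\<And>g. g \<in> G \<Longrightarrow> fin_supp g" "\<And>g. g \<in> G \<Longrightarrow> L g \<in> U"
  shows "L ` lin_span G \<subseteq> U"
  using lin_span_least[OF fsubspace_preimage[OF assms(1,2)], of G] assms(3,4) by blast

lemma flinear_eq_on_lin_span:
  assumes "flinear L1" "flinear L2" "\<And>g. g \<in> G \<Longrightarrow> fin_supp g" "\<And>g. g \<in> G \<Longrightarrow> L1 g = L2 g"
    and "w \<in> lin_span G"
  shows "L1 w = L2 w"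
  using lin_span_least[OF fsubspace_equalizer[OF assms(1,2)], of G] assms(3-5) by blast

lemma flinear_image_ssum:
  assumes L: "flinear L" and U: "fsubspace U" and A: "fsubspace A" and B: "fsubspace B"
    and "L ` A \<subseteq> U" "L ` B \<subseteq> U"
  shows "L ` (A \<oplus>\<^sub>f B) \<subseteq> U"
proof
  fix y assume "y \<in> L ` (A \<oplus>\<^sub>f B)"
  then obtain a b where "a \<in> A" "b \<in> B" "y = L (fadd a b)"
    unfolding ssum_def by blast
  then show "y \<in> U"
    using assms fsubspace_fadd[OF U] by (simp add: flinear_fadd fsubspace_fin_supp image_subset_iff)
qed

section \<open>The Koszul operator and the exterior derivative on monomials\<close>

text \<open>The sign of moving dx_j past the dx_l with l \<in> s and l < j; it is the sign appearing in both
  kappa_mono and d_mono.\<close>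

definition shuffle_sign :: "nat set \<Rightarrow> nat \<Rightarrow> real" where
  "shuffle_sign s j = (-1) ^ card {l\<in>s. l < j}"

lemma shuffle_sign_square [simp]: "shuffle_sign s j * shuffle_sign s j = 1"
  "shuffle_sign s j * (shuffle_sign s j * y) = y"
  unfolding shuffle_sign_def by (simp_all add: power_mult_distrib[symmetric] mult.assoc[symmetric])

lemma shuffle_sign_insert_self: "shuffle_sign (insert j s) j = shuffle_sign s j"
  and shuffle_sign_remove_self: "shuffle_sign (s - {j}) j = shuffle_sign s j"
  and shuffle_sign_insert_less: "i < j \<Longrightarrow> shuffle_sign (insert j s) i = shuffle_sign s i"
  and shuffle_sign_remove_less: "i < j \<Longrightarrow> shuffle_sign (s - {j}) i = shuffle_sign s i"
  unfolding shuffle_sign_def by (rule arg_cong[where f="\<lambda>k. (-1) ^ card k"], auto)+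

lemma shuffle_sign_insert_greater:
  assumes "j \<notin> s" "j < i"
  shows "shuffle_sign (insert j s) i = - shuffle_sign s i"
proof -
  have "{l\<in>insert j s. l < i} = insert j {l\<in>s. l < i}" "j \<notin> {l\<in>s. l < i}"
    using assms by auto
  then show ?thesis
    unfolding shuffle_sign_def by simp
qed

lemma shuffle_sign_remove_greater:
  assumes "i \<in> s" "i < j"
  shows "shuffle_sign (s - {i}) j = - shuffle_sign s j"
  using shuffle_sign_insert_greater[of i "s - {i}" j] assms by (simp add: insert_absorb)

lemma shuffle_sign_remove_remove:
  assumes "i \<in> s" "j \<in> s" "i \<noteq> j"
  shows "shuffle_sign s i * shuffle_sign (s - {i}) j = - (shuffle_sign s j * shuffle_sign (s - {j}) i)"
  using assms
  by (cases i j rule: linorder_cases)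
    (simp_all add: shuffle_sign_remove_less shuffle_sign_remove_greater)

lemma shuffle_sign_insert_insert:
  assumes "i \<notin> s" "j \<notin> s" "i \<noteq> j"
  shows "shuffle_sign s j * shuffle_sign (insert j s) i = - (shuffle_sign s i * shuffle_sign (insert i s) j)"
  using assms
  by (cases i j rule: linorder_cases)
    (simp_all add: shuffle_sign_insert_less shuffle_sign_insert_greater)

lemma shuffle_sign_insert_remove:
  assumes "i \<in> s" "j \<notin> s"
  shows "shuffle_sign s j * shuffle_sign (insert j s) i = - (shuffle_sign s i * shuffle_sign (s - {i}) j)"
  using assms
  by (cases i j rule: linorder_cases)
    (auto simp: shuffle_sign_insert_less shuffle_sign_insert_greater shuffle_sign_remove_less
      shuffle_sign_remove_greater)

lemma kappa_mono_eq:
  "kappa_mono (a, s) = (\<lambda>x. \<Sum>j\<in>s. shuffle_sign s j * fmono (a(j := a j + 1), s - {j}) x)"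
proof
  fix x :: mono
  obtain b t where "x = (b, t)"
    by (cases x)
  then show "kappa_mono (a, s) x = (\<Sum>j\<in>s. shuffle_sign s j * fmono (a(j := a j + 1), s - {j}) x)"
    unfolding kappa_mono_def fmono_def shuffle_sign_def by (simp, intro sum.cong) auto
qed

lemma d_mono_eq:
  "d_mono n (a, s) =
    (\<lambda>x. \<Sum>j\<in>{1..n} - s. (real (a j) * shuffle_sign s j) * fmono (a(j := a j - 1), insert j s) x)"
proof
  fix x :: mono
  obtain b t where "x = (b, t)"
    by (cases x)
  then show "d_mono n (a, s) x =
      (\<Sum>j\<in>{1..n} - s. (real (a j) * shuffle_sign s j) * fmono (a(j := a j - 1), insert j s) x)"
    unfolding d_mono_def fmono_def shuffle_sign_def by (simp, intro sum.cong) auto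
qed

lemma lin_ext_eq:
  assumes "fin_supp w" "finite S" "{m. w m \<noteq> 0} \<subseteq> S"
  shows "lin_ext f w = (\<lambda>m'. \<Sum>m\<in>S. w m * f m m')"
  unfolding lin_ext_def by (intro ext sum.mono_neutral_left) (use assms in auto)

lemma lin_ext_fmono: "lin_ext f (fmono m) = f m"
proof -
  have "lin_ext f (fmono m) = (\<lambda>m'. \<Sum>x\<in>{m}. fmono m x * f x m')"
    by (rule lin_ext_eq[OF fin_supp_fmono]) (auto simp: fmono_def split: if_splits)
  then show ?thesis
    by (simp add: fmono_def)
qed

lemma flinear_lin_ext:
  assumes F: "\<And>m. fin_supp (f m)"
  shows "flinear (lin_ext f)"
  unfolding flinear_def
proof (intro conjI allI impI)
  fix a b assume a: "fin_supp a" and b: "fin_supp b"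
  let ?S = "{m. a m \<noteq> 0} \<union> {m. b m \<noteq> 0}"
  have S: "finite ?S"
    using a b by (simp add: fin_supp_def)
  have "lin_ext f (fadd a b) = (\<lambda>m'. \<Sum>m\<in>?S. fadd a b m * f m m')"
    by (rule lin_ext_eq[OF fin_supp_fadd[OF a b] S]) (auto simp: fadd_def)
  moreover have "lin_ext f a = (\<lambda>m'. \<Sum>m\<in>?S. a m * f m m')"
    by (rule lin_ext_eq[OF a S]) auto
  moreover have "lin_ext f b = (\<lambda>m'. \<Sum>m\<in>?S. b m * f m m')"
    by (rule lin_ext_eq[OF b S]) auto
  ultimately show "lin_ext f (fadd a b) = fadd (lin_ext f a) (lin_ext f b)"
    by (simp add: fadd_def distrib_right sum.distrib)
next
  fix c and a :: form assume a: "fin_supp a"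
  let ?S = "{m. a m \<noteq> 0}"
  have S: "finite ?S"
    using a by (simp add: fin_supp_def)
  have "lin_ext f (fscale c a) = (\<lambda>m'. \<Sum>m\<in>?S. fscale c a m * f m m')"
    by (rule lin_ext_eq[OF fin_supp_fscale[OF a] S]) (auto simp: fscale_def)
  moreover have "lin_ext f a = (\<lambda>m'. \<Sum>m\<in>?S. a m * f m m')"
    by (rule lin_ext_eq[OF a S]) auto
  ultimately show "lin_ext f (fscale c a) = fscale c (lin_ext f a)"
    by (simp add: fscale_def sum_distrib_left mult.assoc)
next
  fix a :: form assume a: "fin_supp a"
  show "fin_supp (lin_ext f a)"
    unfolding lin_ext_def using a F by (intro fin_supp_sum) (simp_all add: fin_supp_def)
qed

lemma flinear_kappa: "flinear kappa"
  unfolding kappa_def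
proof (rule flinear_lin_ext)
  show "fin_supp (kappa_mono m)" for m
    by (cases m) (simp only: kappa_mono_eq fin_supp_sum_fmono)
qed

lemma flinear_dext: "flinear (dext n)"
  unfolding dext_def
proof (rule flinear_lin_ext)
  show "fin_supp (d_mono n m)" for m
    by (cases m) (simp only: d_mono_eq fin_supp_sum_fmono)
qed

lemma kappa_fmono:
  "kappa (fmono (a, s)) = (\<lambda>x. \<Sum>j\<in>s. shuffle_sign s j * fmono (a(j := a j + 1), s - {j}) x)"
  unfolding kappa_def lin_ext_fmono kappa_mono_eq ..

lemma dext_fmono:
  "dext n (fmono (a, s)) =
    (\<lambda>x. \<Sum>j\<in>{1..n} - s. (real (a j) * shuffle_sign s j) * fmono (a(j := a j - 1), insert j s) x)"
  unfolding dext_def lin_ext_fmono d_mono_eq ..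

lemma antisym_double_sum_eq_0:
  fixes H :: "nat \<Rightarrow> nat \<Rightarrow> real"
  assumes "\<And>i j. i \<in> s \<Longrightarrow> j \<in> s \<Longrightarrow> H j i = - H i j"
  shows "(\<Sum>i\<in>s. \<Sum>j\<in>s. H i j) = 0"
proof -
  have "(\<Sum>i\<in>s. \<Sum>j\<in>s. H i j) = (\<Sum>i\<in>s. \<Sum>j\<in>s. H j i)"
    by (rule sum.swap)
  also have "\<dots> = (\<Sum>i\<in>s. \<Sum>j\<in>s. - H i j)"
    by (intro sum.cong refl, rule assms)
  also have "\<dots> = - (\<Sum>i\<in>s. \<Sum>j\<in>s. H i j)"
    by (simp add: sum_negf)
  finally show ?thesis
    by simp
qed

lemma kappa_kappa_fmono:
  assumes s: "finite s"
  shows "kappa (kappa (fmono (a, s))) = fzero"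
proof
  fix x
  define H where "H i j = (if i = j then 0 else shuffle_sign s i * shuffle_sign (s - {i}) j
      * fmono (a(i := a i + 1, j := a j + 1), s - {i} - {j}) x)" for i j
  have "kappa (kappa (fmono (a, s))) x
      = (\<Sum>i\<in>s. shuffle_sign s i * kappa (fmono (a(i := a i + 1), s - {i})) x)"
    unfolding kappa_fmono[of a s] by (subst flinear_sum[OF flinear_kappa s]) simp_all
  also have "\<dots> = (\<Sum>i\<in>s. \<Sum>j\<in>s. H i j)"
  proof (rule sum.cong[OF refl])
    fix i assume "i \<in> s"
    have "shuffle_sign s i * kappa (fmono (a(i := a i + 1), s - {i})) x = (\<Sum>j\<in>s - {i}. H i j)"
      unfolding kappa_fmono by (simp add: sum_distrib_left H_def mult.assoc)
    also have "\<dots> = (\<Sum>j\<in>s. H i j)"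
      by (rule sum.mono_neutral_left) (use s in \<open>auto simp: H_def\<close>)
    finally show "shuffle_sign s i * kappa (fmono (a(i := a i + 1), s - {i})) x = (\<Sum>j\<in>s. H i j)" .
  qed
  also have "\<dots> = 0"
  proof (rule antisym_double_sum_eq_0)
    fix i j assume ij: "i \<in> s" "j \<in> s"
    show "H j i = - H i j"
    proof (cases "i = j")
      case False
      have "a(j := a j + 1, i := a i + 1) = a(i := a i + 1, j := a j + 1)"
        by (rule fun_upd_twist) (use False in simp)
      moreover have "s - {j} - {i} = s - {i} - {j}"
        by blast
      ultimately show ?thesis
        using False shuffle_sign_remove_remove[OF ij False] by (simp add: H_def)
    qed (simp add: H_def)
  qed
  finally show "kappa (kappa (fmono (a, s))) x = fzero x"
    by (simp add: fzero_def)
qed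

lemma dext_dext_fmono: "dext n (dext n (fmono (a, s))) = fzero"
proof
  fix x
  let ?N = "{1..n} - s"
  define H where "H j i = (if i = j then 0 else (real (a j) * shuffle_sign s j)
      * (real (a i) * shuffle_sign (insert j s) i)
      * fmono (a(j := a j - 1, i := a i - 1), insert i (insert j s)) x)" for i j
  have "dext n (dext n (fmono (a, s))) x
      = (\<Sum>j\<in>?N. (real (a j) * shuffle_sign s j) * dext n (fmono (a(j := a j - 1), insert j s)) x)"
    unfolding dext_fmono[of n a s] by (subst flinear_sum[OF flinear_dext]) simp_all
  also have "\<dots> = (\<Sum>j\<in>?N. \<Sum>i\<in>?N. H j i)"
  proof (rule sum.cong[OF refl])
    fix j assume "j \<in> ?N"
    then have N: "{1..n} - insert j s = ?N - {j}"
      by auto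
    have "(real (a j) * shuffle_sign s j) * dext n (fmono (a(j := a j - 1), insert j s)) x
        = (\<Sum>i\<in>?N - {j}. H j i)"
      unfolding dext_fmono N by (simp add: sum_distrib_left H_def mult.assoc)
    also have "\<dots> = (\<Sum>i\<in>?N. H j i)"
      by (rule sum.mono_neutral_left) (auto simp: H_def)
    finally show "(real (a j) * shuffle_sign s j) * dext n (fmono (a(j := a j - 1), insert j s)) x
        = (\<Sum>i\<in>?N. H j i)" .
  qed
  also have "\<dots> = 0"
  proof (rule antisym_double_sum_eq_0)
    fix i j assume ij: "i \<in> ?N" "j \<in> ?N"
    show "H i j = - H j i"
    proof (cases "i = j")
      case False
      have "a(i := a i - 1, j := a j - 1) = a(j := a j - 1, i := a i - 1)"
        by (rule fun_upd_twist) (use False in simp)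
      moreover have "insert j (insert i s) = insert i (insert j s)"
        by blast
      ultimately have "H i j = (real (a i) * real (a j)
          * fmono (a(j := a j - 1, i := a i - 1), insert i (insert j s)) x)
          * (shuffle_sign s i * shuffle_sign (insert i s) j)"
        and "H j i = (real (a i) * real (a j)
          * fmono (a(j := a j - 1, i := a i - 1), insert i (insert j s)) x)
          * (shuffle_sign s j * shuffle_sign (insert j s) i)"
        using False unfolding H_def by (simp_all add: algebra_simps)
      then show ?thesis
        using shuffle_sign_insert_insert[of j s i] ij False by simp
    qed (simp add: H_def)
  qed
  finally show "dext n (dext n (fmono (a, s))) x = fzero x"
    by (simp add: fzero_def)
qed

lemma kappa_fmono_insert:
  assumes "finite s" "j \<notin> s"
  shows "kappa (fmono (b, insert j s)) = (\<lambda>x. shuffle_sign s j * fmono (b(j := b j + 1), s) x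
    + (\<Sum>i\<in>s. shuffle_sign (insert j s) i * fmono (b(i := b i + 1), insert j s - {i}) x))"
proof -
  have "insert j s - {j} = s"
    using assms(2) by blast
  then show ?thesis
    unfolding kappa_fmono using assms by (simp add: shuffle_sign_insert_self)
qed

lemma dext_fmono_remove:
  assumes "s \<subseteq> {1..n}" "i \<in> s"
  shows "dext n (fmono (b, s - {i})) = (\<lambda>x. (real (b i) * shuffle_sign s i) * fmono (b(i := b i - 1), s) x
    + (\<Sum>j\<in>{1..n} - s. (real (b j) * shuffle_sign (s - {i}) j) * fmono (b(j := b j - 1), insert j (s - {i})) x))"
proof -
  have "{1..n} - (s - {i}) = insert i ({1..n} - s)"
    using assms by auto
  then show ?thesis
    unfolding dext_fmono using assms(2) by (simp add: shuffle_sign_remove_self insert_absorb)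
qed

lemma kappa_dext_fmono:
  assumes s: "finite s"
  shows "kappa (dext n (fmono (a, s))) x = real (\<Sum>j\<in>{1..n} - s. a j) * fmono (a, s) x
    + (\<Sum>j\<in>{1..n} - s. \<Sum>i\<in>s. real (a j) * (shuffle_sign s j * shuffle_sign (insert j s) i)
        * fmono (a(j := a j - 1, i := a i + 1), insert j s - {i}) x)"
proof -
  have "kappa (dext n (fmono (a, s))) x = (\<Sum>j\<in>{1..n} - s.
      (real (a j) * shuffle_sign s j) * kappa (fmono (a(j := a j - 1), insert j s)) x)"
    unfolding dext_fmono[of n a s] by (subst flinear_sum[OF flinear_kappa]) simp_all
  also have "\<dots> = (\<Sum>j\<in>{1..n} - s. real (a j) * fmono (a, s) x
      + (\<Sum>i\<in>s. real (a j) * (shuffle_sign s j * shuffle_sign (insert j s) i)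
        * fmono (a(j := a j - 1, i := a i + 1), insert j s - {i}) x))"
  proof (rule sum.cong[OF refl])
    fix j assume j: "j \<in> {1..n} - s"
    have restore: "real (a j) * fmono ((a(j := a j - 1))(j := (a(j := a j - 1)) j + 1), s) x
        = real (a j) * fmono (a, s) x"
      by (cases "a j = 0") auto
    have "(a(j := a j - 1))(i := (a(j := a j - 1)) i + 1) = a(j := a j - 1, i := a i + 1)" if "i \<in> s" for i
      using that j by auto
    then show "(real (a j) * shuffle_sign s j) * kappa (fmono (a(j := a j - 1), insert j s)) x
        = real (a j) * fmono (a, s) x
          + (\<Sum>i\<in>s. real (a j) * (shuffle_sign s j * shuffle_sign (insert j s) i)
            * fmono (a(j := a j - 1, i := a i + 1), insert j s - {i}) x)"
      using j s restore
      by (simp add: kappa_fmono_insert distrib_left sum_distrib_left algebra_simps)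
  qed
  finally show ?thesis
    by (simp add: sum.distrib sum_distrib_left sum_distrib_right algebra_simps)
qed

lemma dext_kappa_fmono:
  assumes s: "s \<subseteq> {1..n}"
  shows "dext n (kappa (fmono (a, s))) x = (real (\<Sum>i\<in>s. a i) + real (card s)) * fmono (a, s) x
    + (\<Sum>i\<in>s. \<Sum>j\<in>{1..n} - s. real (a j) * (shuffle_sign s i * shuffle_sign (s - {i}) j)
        * fmono (a(j := a j - 1, i := a i + 1), insert j s - {i}) x)"
proof -
  have fin: "finite s"
    using s finite_subset by blast
  have "dext n (kappa (fmono (a, s))) x
      = (\<Sum>i\<in>s. shuffle_sign s i * dext n (fmono (a(i := a i + 1), s - {i})) x)"
    unfolding kappa_fmono[of a s] by (subst flinear_sum[OF flinear_dext fin]) simp_all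
  also have "\<dots> = (\<Sum>i\<in>s. (real (a i) + 1) * fmono (a, s) x
      + (\<Sum>j\<in>{1..n} - s. real (a j) * (shuffle_sign s i * shuffle_sign (s - {i}) j)
        * fmono (a(j := a j - 1, i := a i + 1), insert j s - {i}) x))"
  proof (rule sum.cong[OF refl])
    fix i assume i: "i \<in> s"
    have "(a(i := a i + 1))(j := (a(i := a i + 1)) j - 1) = a(j := a j - 1, i := a i + 1)"
      and "insert j (s - {i}) = insert j s - {i}" and "(a(i := a i + 1)) j = a j"
      if "j \<in> {1..n} - s" for j
      using that i by (auto simp: fun_upd_twist)
    then show "shuffle_sign s i * dext n (fmono (a(i := a i + 1), s - {i})) x
        = (real (a i) + 1) * fmono (a, s) x
          + (\<Sum>j\<in>{1..n} - s. real (a j) * (shuffle_sign s i * shuffle_sign (s - {i}) j)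
            * fmono (a(j := a j - 1, i := a i + 1), insert j s - {i}) x)"
      using i s by (simp add: dext_fmono_remove distrib_left sum_distrib_left algebra_simps)
  qed
  finally show ?thesis
    by (simp add: sum.distrib sum_distrib_left sum_distrib_right algebra_simps)
qed

text \<open>The mixed terms of the two expansions above cancel.\<close>

lemma homotopy_fmono:
  assumes s: "s \<subseteq> {1..n}"
  shows "fadd (kappa (dext n (fmono (a, s)))) (dext n (kappa (fmono (a, s))))
    = fscale (real (\<Sum>i\<in>{1..n}. a i) + real (card s)) (fmono (a, s))"
proof
  fix x
  let ?N = "{1..n} - s"
  let ?F = "\<lambda>i j. fmono (a(j := a j - 1, i := a i + 1), insert j s - {i}) x"
  have "(\<Sum>j\<in>?N. \<Sum>i\<in>s. real (a j) * (shuffle_sign s j * shuffle_sign (insert j s) i) * ?F i j)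
      = (\<Sum>i\<in>s. \<Sum>j\<in>?N. - (real (a j) * (shuffle_sign s i * shuffle_sign (s - {i}) j) * ?F i j))"
    by (subst sum.swap) (intro sum.cong refl, simp add: shuffle_sign_insert_remove)
  then have mixed: "(\<Sum>j\<in>?N. \<Sum>i\<in>s. real (a j) * (shuffle_sign s j * shuffle_sign (insert j s) i) * ?F i j)
      + (\<Sum>i\<in>s. \<Sum>j\<in>?N. real (a j) * (shuffle_sign s i * shuffle_sign (s - {i}) j) * ?F i j) = 0"
    by (simp add: sum_negf)
  have degree: "(\<Sum>j\<in>?N. a j) + (\<Sum>i\<in>s. a i) = (\<Sum>i\<in>{1..n}. a i)"
    using sum.subset_diff[OF s, of a] by simp
  have "fadd (kappa (dext n (fmono (a, s)))) (dext n (kappa (fmono (a, s)))) x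
      = (real (\<Sum>j\<in>?N. a j) + real (\<Sum>i\<in>s. a i) + real (card s)) * fmono (a, s) x"
    unfolding fadd_def kappa_dext_fmono[OF finite_subset[OF s finite_atLeastAtMost]]
      dext_kappa_fmono[OF s] using mixed by (simp add: algebra_simps)
  then show "fadd (kappa (dext n (fmono (a, s)))) (dext n (kappa (fmono (a, s)))) x
      = fscale (real (\<Sum>i\<in>{1..n}. a i) + real (card s)) (fmono (a, s)) x"
    unfolding fscale_def by (metis degree of_nat_add)
qed

section \<open>Homogeneous forms\<close>

lemma fmonosD:
  assumes "(a, s) \<in> fmonos n p k"
  shows "s \<subseteq> {1..n}" "\<And>i. a i \<noteq> 0 \<Longrightarrow> i \<in> {1..n}" "(\<Sum>i\<in>{1..n}. a i) = p"
    "int (card s) = k" "finite s"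
  using assms unfolding fmonos_def by (auto intro: finite_subset)

lemma sum_fun_upd:
  assumes "finite N" "j \<in> N"
  shows "(\<Sum>i\<in>N. (a(j := v)) i) + a j = (\<Sum>i\<in>N. a i) + (v::nat)"
  using sum.remove[OF assms, of "a(j := v)"] sum.remove[OF assms, of a] by simp

lemma fmonos_kappa_term:
  assumes m: "(a, s) \<in> fmonos n p k" and j: "j \<in> s"
  shows "(a(j := a j + 1), s - {j}) \<in> fmonos n (p + 1) (k - 1)"
  unfolding fmonos_def
proof (intro CollectI case_prodI conjI allI impI)
  note F = fmonosD[OF m]
  have jn: "j \<in> {1..n}"
    using j F(1) by blast
  show "i \<in> {1..n}" if "(a(j := a j + 1)) i \<noteq> 0" for i
    using that F(2) jn by (cases "i = j") auto
  show "s - {j} \<subseteq> {1..n}"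
    using F(1) by blast
  show "int (card (s - {j})) = k - 1"
    using card.remove[OF F(5) j] F(4) by simp
  show "(\<Sum>i\<in>{1..n}. (a(j := a j + 1)) i) = p + 1"
    using sum_fun_upd[of "{1..n}" j a "a j + 1"] jn F(3) by simp
qed

lemma fmonos_dext_term:
  assumes m: "(a, s) \<in> fmonos n p k" and j: "j \<in> {1..n} - s" and aj: "a j \<noteq> 0"
  shows "(a(j := a j - 1), insert j s) \<in> fmonos n (p - 1) (k + 1)"
  unfolding fmonos_def
proof (intro CollectI case_prodI conjI allI impI)
  note F = fmonosD[OF m]
  show "i \<in> {1..n}" if "(a(j := a j - 1)) i \<noteq> 0" for i
    using that F(2) j by (cases "i = j") auto
  show "insert j s \<subseteq> {1..n}"
    using F(1) j by blast
  show "int (card (insert j s)) = k + 1"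
    using F(4,5) j by simp
  have "(\<Sum>i\<in>{1..n}. (a(j := a j - 1)) i) + a j = p + (a j - 1)"
    using sum_fun_upd[of "{1..n}" j a "a j - 1"] j F(3) by simp
  then show "(\<Sum>i\<in>{1..n}. (a(j := a j - 1)) i) = p - 1"
    using aj by linarith
qed

lemma fsubspace_HH: "fsubspace (HH n p k)"
  unfolding HH_def by (rule lin_span_fsubspace) auto

lemma fmono_in_HH: "m \<in> fmonos n p k \<Longrightarrow> fmono m \<in> HH n p k"
  unfolding HH_def by (rule lin_span_superset) simp

lemma HHl_subset_HH: "HHl n p l k \<subseteq> HH n p k"
  unfolding HHl_def HH_def by (rule lin_span_mono) auto

lemma HHl_antimono: "l' \<le> l \<Longrightarrow> HHl n p l k \<subseteq> HHl n p l' k"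
  unfolding HHl_def by (rule lin_span_mono) auto

lemma HH_image_subset:
  assumes "flinear L" "fsubspace U" "\<And>a s. (a, s) \<in> fmonos n p k \<Longrightarrow> L (fmono (a, s)) \<in> U"
  shows "L ` HH n p k \<subseteq> U"
  unfolding HH_def by (rule flinear_image_lin_span[OF assms(1,2)]) (use assms(3) in auto)

lemma HH_flinear_eq:
  assumes "flinear L1" "flinear L2"
    and "\<And>a s. (a, s) \<in> fmonos n p k \<Longrightarrow> L1 (fmono (a, s)) = L2 (fmono (a, s))"
    and "w \<in> HH n p k"
  shows "L1 w = L2 w"
  using assms(4) unfolding HH_def
  by (rule flinear_eq_on_lin_span[OF assms(1,2), rotated 2]) (use assms(3) in auto)

lemma kappa_in_HH:
  assumes "w \<in> HH n p k"
  shows "kappa w \<in> HH n (p + 1) (k - 1)"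
proof -
  have "kappa (fmono (a, s)) \<in> HH n (p + 1) (k - 1)" if "(a, s) \<in> fmonos n p k" for a s
    unfolding kappa_fmono
    by (rule fsubspace_sum[OF fsubspace_HH fmonosD(5)[OF that]], rule fmono_in_HH[OF fmonos_kappa_term[OF that]])
  then show ?thesis
    using HH_image_subset[OF flinear_kappa fsubspace_HH] assms by blast
qed

lemma dext_in_HH:
  assumes "w \<in> HH n p k"
  shows "dext n w \<in> HH n (p - 1) (k + 1)"
proof -
  have "dext n (fmono (a, s)) \<in> HH n (p - 1) (k + 1)" if "(a, s) \<in> fmonos n p k" for a s
    unfolding dext_fmono
  proof (rule fsubspace_sum[OF fsubspace_HH])
    fix j assume j: "j \<in> {1..n} - s" "real (a j) * shuffle_sign s j \<noteq> 0"
    then have "a j \<noteq> 0"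
      by auto
    then show "fmono (a(j := a j - 1), insert j s) \<in> HH n (p - 1) (k + 1)"
      by (rule fmono_in_HH[OF fmonos_dext_term[OF that j(1)]])
  qed simp
  then show ?thesis
    using HH_image_subset[OF flinear_dext fsubspace_HH] assms by blast
qed

lemma homotopy_HH:
  assumes "w \<in> HH n p k"
  shows "fadd (kappa (dext n w)) (dext n (kappa w)) = fscale (real p + of_int k) w"
proof (rule HH_flinear_eq[OF _ flinear_fscale_map _ assms])
  show "flinear (\<lambda>w. fadd (kappa (dext n w)) (dext n (kappa w)))"
    by (rule flinear_plus[OF flinear_comp[OF flinear_kappa flinear_dext]
          flinear_comp[OF flinear_dext flinear_kappa]])
  fix a s assume m: "(a, s) \<in> fmonos n p k"
  show "fadd (kappa (dext n (fmono (a, s)))) (dext n (kappa (fmono (a, s))))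
      = fscale (real p + of_int k) (fmono (a, s))"
    unfolding fmonosD(3,4)[OF m, symmetric] homotopy_fmono[OF fmonosD(1)[OF m]] by simp
qed

lemma kappa_kappa_HH: "w \<in> HH n p k \<Longrightarrow> kappa (kappa w) = fzero"
  by (rule HH_flinear_eq[OF flinear_comp[OF flinear_kappa flinear_kappa] flinear_fzero_map])
    (auto simp: kappa_kappa_fmono dest: fmonosD)

lemma dext_dext_HH: "w \<in> HH n p k \<Longrightarrow> dext n (dext n w) = fzero"
  by (rule HH_flinear_eq[OF flinear_comp[OF flinear_dext flinear_dext] flinear_fzero_map])
    (auto simp: dext_dext_fmono)

lemma kappa_dext_kappa_HH:
  assumes h: "h \<in> HH n p k"
  shows "kappa (dext n (kappa h)) = fscale (real p + of_int k) (kappa h)"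
proof -
  have dh: "dext n h \<in> HH n (p - 1) (k + 1)"
    using dext_in_HH[OF h] .
  have "kappa (fadd (kappa (dext n h)) (dext n (kappa h)))
      = fadd (kappa (kappa (dext n h))) (kappa (dext n (kappa h)))"
    by (rule flinear_fadd[OF flinear_kappa flinear_fin_supp[OF flinear_kappa]
          flinear_fin_supp[OF flinear_dext]])
      (use fsubspace_fin_supp[OF fsubspace_HH] h dh flinear_fin_supp[OF flinear_kappa] in blast)+
  also have "kappa (kappa (dext n h)) = fzero"
    using kappa_kappa_HH[OF dh] .
  finally show ?thesis
    unfolding homotopy_HH[OF h]
    using flinear_fscale[OF flinear_kappa fsubspace_fin_supp[OF fsubspace_HH h]] by simp
qed

lemma fsubspace_fscale_cancel: "fsubspace U \<Longrightarrow> c \<noteq> 0 \<Longrightarrow> fscale c w \<in> U \<Longrightarrow> w \<in> U"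
  using fsubspace_fscale[of U "fscale c w" "1 / c"] by (simp add: fscale_def)

lemma fmonos_outside_range:
  assumes "k < 0 \<or> int n < k"
  shows "fmonos n p k = {}"
proof (rule equals0I)
  fix m assume "m \<in> fmonos n p k"
  moreover obtain a s where m: "m = (a, s)"
    by (cases m)
  ultimately have "(a, s) \<in> fmonos n p k"
    by simp
  then have "s \<subseteq> {1..n}" "int (card s) = k"
    by (rule fmonosD)+
  moreover have "card s \<le> n"
    using card_mono[OF finite_atLeastAtMost \<open>s \<subseteq> {1..n}\<close>] by simp
  ultimately show False
    using assms by linarith
qed

lemma HH_outside_range: "k < 0 \<or> int n < k \<Longrightarrow> HH n p k = {fzero}"
  unfolding HH_def by (simp add: fmonos_outside_range lin_span_empty)

lemma kappa_HH_0: "w \<in> HH n p 0 \<Longrightarrow> kappa w = fzero"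
proof (rule HH_flinear_eq[OF flinear_kappa flinear_fzero_map])
  fix a s assume "(a, s) \<in> fmonos n p 0"
  then have "s = {}"
    using fmonosD(4,5) by fastforce
  then show "kappa (fmono (a, s)) = fzero"
    by (simp add: kappa_fmono fzero_def)
qed

section \<open>Serendipity spaces\<close>

lemma PP_generators_fin_supp: "g \<in> (\<Union>j\<in>{0..r}. HH n j k) \<Longrightarrow> fin_supp g"
  using fsubspace_fin_supp[OF fsubspace_HH] by blast

lemma JJ_generators_fin_supp: "g \<in> (\<Union>l\<in>{1..}. kappa ` HHl n (r + l - 1) l (k + 1)) \<Longrightarrow> fin_supp g"
  using HHl_subset_HH fsubspace_fin_supp[OF fsubspace_HH] flinear_fin_supp[OF flinear_kappa] by blast

lemma fsubspace_PP: "fsubspace (PP n r k)"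
  unfolding PP_def using PP_generators_fin_supp by (rule lin_span_fsubspace)

lemma fsubspace_JJ: "fsubspace (JJ n r k)"
  unfolding JJ_def using JJ_generators_fin_supp by (rule lin_span_fsubspace)

lemma fsubspace_SS: "fsubspace (SS n r k)"
  unfolding SS_def
  by (intro fsubspace_ssum fsubspace_PP fsubspace_JJ fsubspace_image[OF flinear_dext])

lemma fsubspace_SSm: "fsubspace (SSm n r k)"
  unfolding SSm_def by (intro fsubspace_ssum fsubspace_SS fsubspace_image[OF flinear_kappa])

lemma PP_image_subset:
  assumes "flinear L" "fsubspace U" "\<And>j w. j \<le> r \<Longrightarrow> w \<in> HH n j k \<Longrightarrow> L w \<in> U"
  shows "L ` PP n r k \<subseteq> U"
  unfolding PP_def
  by (rule flinear_image_lin_span[OF assms(1,2) PP_generators_fin_supp]) (use assms(3) in auto)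

lemma JJ_image_subset:
  assumes "flinear L" "fsubspace U"
    and "\<And>l h. 1 \<le> l \<Longrightarrow> h \<in> HHl n (r + l - 1) l (k + 1) \<Longrightarrow> L (kappa h) \<in> U"
  shows "L ` JJ n r k \<subseteq> U"
  unfolding JJ_def
  by (rule flinear_image_lin_span[OF assms(1,2) JJ_generators_fin_supp]) (use assms(3) in auto)

lemma SS_image_subset:
  assumes L: "flinear L" and U: "fsubspace U"
    and "L ` PP n r k \<subseteq> U" "L ` JJ n r k \<subseteq> U" "L ` dext n ` JJ n (r + 1) (k - 1) \<subseteq> U"
  shows "L ` SS n r k \<subseteq> U"
  unfolding SS_def
  by (intro flinear_image_ssum[OF L U] fsubspace_ssum fsubspace_PP fsubspace_JJ
      fsubspace_image[OF flinear_dext] assms(3-5))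

lemma HH_in_PP: "j \<le> r \<Longrightarrow> w \<in> HH n j k \<Longrightarrow> w \<in> PP n r k"
  unfolding PP_def by (rule lin_span_superset) auto

lemma kappa_HHl_in_JJ: "1 \<le> l \<Longrightarrow> h \<in> HHl n (r + l - 1) l (k + 1) \<Longrightarrow> kappa h \<in> JJ n r k"
  unfolding JJ_def by (rule lin_span_superset) auto

lemma PP_subset_SS: "PP n r k \<subseteq> SS n r k"
  and JJ_subset_SS: "JJ n r k \<subseteq> SS n r k"
  and dext_JJ_subset_SS: "dext n ` JJ n (r + 1) (k - 1) \<subseteq> SS n r k"
  unfolding SS_def
  by (meson fsubspace_fzero fsubspace_image fsubspace_JJ fsubspace_PP fsubspace_ssum flinear_dext
      ssum_upper1 ssum_upper2 subset_trans)+

lemma HH_in_SS: "j \<le> r \<Longrightarrow> w \<in> HH n j k \<Longrightarrow> w \<in> SS n r k"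
  using HH_in_PP PP_subset_SS by blast

lemma SS_outside_range:
  assumes "k < 0 \<or> int n < k"
  shows "SS n p k = {fzero}"
proof -
  have PP: "PP n p k \<subseteq> {fzero}"
    using PP_image_subset[OF flinear_id fsubspace_fzero_only, of p n k] HH_outside_range[OF assms]
    by simp
  have JJ: "JJ n p' k' \<subseteq> {fzero}" if "k' < 0 \<or> int n \<le> k'" for p' k'
  proof -
    have "kappa h = fzero" if "h \<in> HH n q (k' + 1)" for q h
    proof (cases "k' + 1 = 0")
      case True
      then show ?thesis
        using kappa_HH_0 that by simp
    next
      case False
      then have "h = fzero"
        using that HH_outside_range[of "k' + 1" n q] \<open>k' < 0 \<or> int n \<le> k'\<close> by auto
      then show ?thesis
        by (simp add: flinear_fzero[OF flinear_kappa])
    qed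
    then show ?thesis
      using JJ_image_subset[OF flinear_id fsubspace_fzero_only] HHl_subset_HH by blast
  qed
  have "k - 1 < 0 \<or> int n \<le> k - 1" "k < 0 \<or> int n \<le> k"
    using assms by linarith+
  then have "dext n ` JJ n (p + 1) (k - 1) \<subseteq> {fzero}" "JJ n p k \<subseteq> {fzero}"
    using JJ flinear_fzero[OF flinear_dext] by blast+
  then have "SS n p k \<subseteq> {fzero}"
    using SS_image_subset[OF flinear_id fsubspace_fzero_only, of n p k] PP by simp
  then show ?thesis
    using fsubspace_fzero[OF fsubspace_SS] by blast
qed

lemma JJ_generator_in_HH_or_JJ_Suc:
  assumes l: "1 \<le> l" and h: "h \<in> HHl n (q + l - 1) l (k + 1)"
  shows "kappa h \<in> HH n (Suc q) k \<or> kappa h \<in> JJ n (Suc q) k"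
proof (cases "l = 1")
  case True
  then have "h \<in> HH n q (k + 1)"
    using h HHl_subset_HH by fastforce
  then show ?thesis
    using kappa_in_HH by fastforce
next
  case False
  then have "h \<in> HHl n (Suc q + (l - 1) - 1) (l - 1) (k + 1)"
    using h HHl_antimono[of "l - 1" l] l by (auto simp: Suc_diff_le)
  then show ?thesis
    using kappa_HHl_in_JJ[of "l - 1"] False l by auto
qed

lemma SS_subset_SS_Suc: "SS n q k \<subseteq> SS n (Suc q) k"
proof -
  have "(\<lambda>w. w) ` PP n q k \<subseteq> SS n (Suc q) k"
    by (rule PP_image_subset[OF flinear_id fsubspace_SS]) (rule HH_in_SS[OF le_SucI])
  moreover have "(\<lambda>w. w) ` JJ n q k \<subseteq> SS n (Suc q) k"
  proof (rule JJ_image_subset[OF flinear_id fsubspace_SS])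
    fix l h assume "1 \<le> l" "h \<in> HHl n (q + l - 1) l (k + 1)"
    then show "kappa h \<in> SS n (Suc q) k"
      using JJ_generator_in_HH_or_JJ_Suc HH_in_SS[OF order_refl] JJ_subset_SS by blast
  qed
  moreover have "dext n ` JJ n (q + 1) (k - 1) \<subseteq> SS n (Suc q) k"
  proof (rule JJ_image_subset[OF flinear_dext fsubspace_SS])
    fix l h assume "1 \<le> l" "h \<in> HHl n (q + 1 + l - 1) l (k - 1 + 1)"
    then consider "kappa h \<in> HH n (Suc (q + 1)) (k - 1)" | "kappa h \<in> JJ n (Suc (q + 1)) (k - 1)"
      using JJ_generator_in_HH_or_JJ_Suc by blast
    then show "dext n (kappa h) \<in> SS n (Suc q) k"
    proof cases
      case 1
      then show ?thesis
        using dext_in_HH HH_in_SS by fastforce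
    next
      case 2
      then show ?thesis
        using dext_JJ_subset_SS[of n "Suc q" k] by auto
    qed
  qed
  ultimately show ?thesis
    using SS_image_subset[OF flinear_id fsubspace_SS, of n q k] by simp
qed

lemma kappa_SS_subset_SS_Suc: "kappa ` SS n q (k + 1) \<subseteq> SS n (Suc q) k"
proof (rule SS_image_subset[OF flinear_kappa fsubspace_SS])
  show "kappa ` PP n q (k + 1) \<subseteq> SS n (Suc q) k"
  proof (rule PP_image_subset[OF flinear_kappa fsubspace_SS])
    fix j w assume "j \<le> q" "w \<in> HH n j (k + 1)"
    then show "kappa w \<in> SS n (Suc q) k"
      using kappa_in_HH HH_in_SS[of "j + 1" "Suc q"] by fastforce
  qed
  show "kappa ` JJ n q (k + 1) \<subseteq> SS n (Suc q) k"
  proof (rule JJ_image_subset[OF flinear_kappa fsubspace_SS])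
    fix l h assume "h \<in> HHl n (q + l - 1) l (k + 1 + 1)"
    then have "kappa (kappa h) = fzero"
      using HHl_subset_HH kappa_kappa_HH by blast
    then show "kappa (kappa h) \<in> SS n (Suc q) k"
      using fsubspace_fzero[OF fsubspace_SS] by simp
  qed
  show "kappa ` dext n ` JJ n (q + 1) (k + 1 - 1) \<subseteq> SS n (Suc q) k"
    unfolding image_image
  proof (rule JJ_image_subset[OF flinear_comp[OF flinear_kappa flinear_dext] fsubspace_SS])
    fix l h assume l: "1 \<le> l" and h: "h \<in> HHl n (q + 1 + l - 1) l (k + 1 - 1 + 1)"
    then have "kappa (dext n (kappa h)) = fscale (real (q + 1 + l - 1) + of_int (k + 1)) (kappa h)"
      using kappa_dext_kappa_HH HHl_subset_HH by fastforce
    moreover have "kappa h \<in> SS n (Suc q) k"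
      using kappa_HHl_in_JJ[OF l h] JJ_subset_SS by fastforce
    ultimately show "kappa (dext n (kappa h)) \<in> SS n (Suc q) k"
      using fsubspace_fscale[OF fsubspace_SS] by simp
  qed
qed

lemma dext_SS_subset_SS: "dext n ` SS n (r + 1) (k - 1) \<subseteq> SS n r k"
proof (rule SS_image_subset[OF flinear_dext fsubspace_SS])
  show "dext n ` PP n (r + 1) (k - 1) \<subseteq> SS n r k"
  proof (rule PP_image_subset[OF flinear_dext fsubspace_SS])
    fix j w assume "j \<le> r + 1" "w \<in> HH n j (k - 1)"
    then show "dext n w \<in> SS n r k"
      using dext_in_HH HH_in_SS[of "j - 1" r] by fastforce
  qed
  show "dext n ` JJ n (r + 1) (k - 1) \<subseteq> SS n r k"
    by (rule dext_JJ_subset_SS)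
  show "dext n ` dext n ` JJ n (r + 1 + 1) (k - 1 - 1) \<subseteq> SS n r k"
    unfolding image_image
  proof (rule JJ_image_subset[OF flinear_comp[OF flinear_dext flinear_dext] fsubspace_SS])
    fix l h assume "h \<in> HHl n (r + 1 + 1 + l - 1) l (k - 1 - 1 + 1)"
    then have "dext n (dext n (kappa h)) = fzero"
      using HHl_subset_HH kappa_in_HH dext_dext_HH by blast
    then show "dext n (dext n (kappa h)) \<in> SS n r k"
      using fsubspace_fzero[OF fsubspace_SS] by simp
  qed
qed

lemma SS_subset_SSm_ssum_dext:
  assumes k: "0 \<le> k"
  shows "SS n (Suc q) k \<subseteq> SSm n (Suc q) k \<oplus>\<^sub>f dext n ` SS n (Suc q + 1) (k - 1)"
    (is "_ \<subseteq> ?T")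
proof -
  have T: "fsubspace ?T"
    by (intro fsubspace_ssum fsubspace_SSm fsubspace_image[OF flinear_dext] fsubspace_SS)
  have SSm_T: "SSm n (Suc q) k \<subseteq> ?T"
    by (intro ssum_upper1 fsubspace_fzero fsubspace_image[OF flinear_dext] fsubspace_SS)
  have SS_T: "SS n q k \<subseteq> ?T" and kappa_T: "kappa ` SS n q (k + 1) \<subseteq> ?T"
    using SSm_T unfolding SSm_def diff_Suc_1
    by (meson fsubspace_fzero fsubspace_image[OF flinear_kappa] fsubspace_SS ssum_upper1 ssum_upper2
        subset_trans)+
  have dext_T: "dext n ` SS n (Suc q + 1) (k - 1) \<subseteq> ?T"
    by (intro ssum_upper2 fsubspace_fzero fsubspace_SSm)
  have "(\<lambda>w. w) ` PP n (Suc q) k \<subseteq> ?T"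
  proof (rule PP_image_subset[OF flinear_id T])
    fix j w assume j: "j \<le> Suc q" and w: "w \<in> HH n j k"
    show "w \<in> ?T"
    proof (cases "j = Suc q")
      case True
      \<comment> \<open>a form of top degree is recovered from the homotopy formula, as r + k \<noteq> 0\<close>
      have "kappa (dext n w) \<in> ?T"
        using dext_in_HH[OF w] True HH_in_SS[OF order_refl] kappa_T by fastforce
      moreover have "dext n (kappa w) \<in> ?T"
        using kappa_in_HH[OF w] True HH_in_SS[OF order_refl] dext_T by fastforce
      ultimately have "fscale (real j + of_int k) w \<in> ?T"
        using homotopy_HH[OF w] fsubspace_fadd[OF T] by metis
      then show ?thesis
        by (rule fsubspace_fscale_cancel[OF T, rotated]) (use True k in simp)
    next
      case False
      then show ?thesis
        using j w HH_in_SS[of j q] SS_T by auto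
    qed
  qed
  moreover have "(\<lambda>w. w) ` JJ n (Suc q) k \<subseteq> ?T"
  proof (rule JJ_image_subset[OF flinear_id T])
    fix l h assume l: "1 \<le> l" and h: "h \<in> HHl n (Suc q + l - 1) l (k + 1)"
    have "dext n (kappa h) \<in> SS n q (k + 1)"
      using kappa_HHl_in_JJ[OF l h] dext_JJ_subset_SS[of n q "k + 1"] by auto
    then have "kappa (dext n (kappa h)) \<in> ?T"
      using kappa_T by blast
    then have "fscale (real (Suc q + l - 1) + of_int (k + 1)) (kappa h) \<in> ?T"
      using kappa_dext_kappa_HH HHl_subset_HH h by fastforce
    then show "kappa h \<in> ?T"
      by (rule fsubspace_fscale_cancel[OF T, rotated]) (use k in simp)
  qed
  moreover have "dext n ` JJ n (Suc q + 1) (k - 1) \<subseteq> ?T"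
    using JJ_subset_SS dext_T by blast
  ultimately show ?thesis
    using SS_image_subset[OF flinear_id T, of n "Suc q" k] by simp
qed

lemma SSm_ssum_dext_eq_SS:
  assumes "1 \<le> r" "0 \<le> k"
  shows "SSm n r k \<oplus>\<^sub>f dext n ` SS n (r + 1) (k - 1) = SS n r k"
proof -
  obtain q where r: "r = Suc q"
    using assms(1) by (cases r) auto
  have "SSm n r k \<subseteq> SS n r k"
    unfolding SSm_def r diff_Suc_1
    by (intro ssum_least fsubspace_SS SS_subset_SS_Suc kappa_SS_subset_SS_Suc)
  then have "SSm n r k \<oplus>\<^sub>f dext n ` SS n (r + 1) (k - 1) \<subseteq> SS n r k"
    by (intro ssum_least fsubspace_SS dext_SS_subset_SS)
  moreover have "SS n r k \<subseteq> SSm n r k \<oplus>\<^sub>f dext n ` SS n (r + 1) (k - 1)"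
    unfolding r by (rule SS_subset_SSm_ssum_dext[OF assms(2)])
  ultimately show ?thesis
    by (rule antisym)
qed

theorem mainTheorem4:
  fixes n r :: nat
  assumes "1 \<le> n" and "1 \<le> r"
  shows "SSm n r 0 = SS n r 0
    \<and> SSm n r (int n) = SS n (r - 1) (int n)
    \<and> (\<forall>k::int. 0 \<le> k \<and> k \<le> int n \<longrightarrow>
           SSm n r k \<oplus>\<^sub>f dext n ` SS n (r + 1) (k - 1) = SS n r k)"
proof (intro conjI allI impI)
  have "dext n ` SS n (r + 1) (0 - 1) = {fzero}"
    by (simp add: SS_outside_range flinear_fzero[OF flinear_dext])
  then show "SSm n r 0 = SS n r 0"
    using SSm_ssum_dext_eq_SS[OF assms(2), of 0 n] by (simp add: ssum_fzero_right)
  have "kappa ` SS n (r - 1) (int n + 1) = {fzero}"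
    by (simp add: SS_outside_range flinear_fzero[OF flinear_kappa])
  then show "SSm n r (int n) = SS n (r - 1) (int n)"
    by (simp add: SSm_def ssum_fzero_right)
  show "SSm n r k \<oplus>\<^sub>f dext n ` SS n (r + 1) (k - 1) = SS n r k" if "0 \<le> k \<and> k \<le> int n" for k
    using SSm_ssum_dext_eq_SS[OF assms(2)] that by blast
qed

end
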